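(* Let $q\ge 2$, $n\ge 1$, $\delta\ge 2$, and let $r$ be a prime power with $r>q$. Then there exists a subset $\mathcal A\subseteq J_q(n)$ with $$|\mathcal A|\ge\frac{\binom{n+q-1}{n}}{r^{\delta-2}(r-1)}$$ such that $d_L(\mathbf u,\mathbf v)\ge 2\delta$ for all distinct $\mathbf u,\mathbf v\in\mathcal A$.
   Context: $J_q(n)=\{(a_1,\dots,a_q)\in\mathbb Z_{\ge0}^q:\ \sum_{i=1}^q a_i=n\}$. The $L^1$-distance is $d_L(\mathbf u,\mathbf v)=\sum_{i=1}^q|u_i-v_i|$. *)

theory Defs
  imports Complex_Main "HOL-Number_Theory.Prime_Powers"
begin

definition J :: "nat \<Rightarrow> nat \<Rightarrow> nat list set" where
  "J q n = {a. length a = q \<and> sum_list a = n}"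

text \<open>L1 distance (both vectors assumed of the same length).\<close>
definition dL :: "nat list \<Rightarrow> nat list \<Rightarrow> nat" where
  "dL u v = (\<Sum>i<length u. nat \<bar>int (u ! i) - int (v ! i)\<bar>)"

end

theory Submission
  imports Defs "HOL-Algebra.Algebraic_Closure" "HOL-Number_Theory.Residues"
begin

text \<open>
  Choose a field with a subfield \<open>S\<close> of \<open>r\<close> elements and \<open>q\<close> distinct nonzero points
  \<open>\<alpha>\<^sub>0, \<dots>, \<alpha>\<^sub>q\<^sub>-\<^sub>1 \<in> S\<close>, and attach to \<open>u \<in> J q n\<close> the monic polynomial
  \<open>F\<^sub>u = \<Prod>\<^sub>i (X - \<alpha>\<^sub>i)\<^bsup>u\<^sub>i\<^esup>\<close> of degree \<open>n\<close>. Sort the vectors \<open>u\<close> by the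
  \<open>\<delta> - 2\<close> coefficients of \<open>F\<^sub>u\<close> just below the leading one together with its nonzero constant
  term; there are \<open>r\<^bsup>\<delta>-2\<^esup>(r - 1)\<close> classes, so one of them contains at least the stated fraction
  of \<open>J q n\<close>. If \<open>u \<noteq> v\<close> lie in the same class, write \<open>u = m + x\<close>, \<open>v = m + y\<close> with
  \<open>m = min u v\<close>, so that \<open>d\<^sub>L(u,v) = 2w\<close> where \<open>w = |x| = |y|\<close>. Then
  \<open>F\<^sub>u - F\<^sub>v = F\<^sub>m (F\<^sub>x - F\<^sub>y)\<close> has degree at most \<open>n - \<delta> + 1\<close>, while \<open>F\<^sub>m\<close> has degree
  \<open>n - w\<close> and \<open>F\<^sub>x \<noteq> F\<^sub>y\<close> (their root sets differ). Hence \<open>w < \<delta>\<close> would force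
  \<open>F\<^sub>x - F\<^sub>y\<close> to be a nonzero constant, making the constant term of \<open>F\<^sub>u - F\<^sub>v\<close> nonzero.
  The field of order \<open>r = p\<^sup>k\<close> is the set of roots of \<open>X\<^bsup>r\<^esup> - X\<close> in an algebraic
  closure of \<open>\<int>/p\<close>.
\<close>

section \<open>Frobenius additivity\<close>

lemma (in cring) binomial_add_one:
  assumes x: "x \<in> carrier R"
  shows "(x \<oplus> \<one>) [^] n = (\<Oplus>k\<in>{..n}. add_pow R (n choose k) (x [^] k))"
proof (induction n)
  case 0
  then show ?case using x by simp
next
  case (Suc n)
  let ?f = "\<lambda>k. add_pow R (n choose k) (x [^] k)"
  have fc: "?f \<in> UNIV \<rightarrow> carrier R" using x by auto
  have top: "(\<Oplus>k\<in>{..Suc n}. ?f k) = (\<Oplus>k\<in>{..n}. ?f k)"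
    using finsum_Suc[of ?f n] fc x by (simp add: binomial_eq_0)
  have shift: "(\<Oplus>k\<in>{..Suc n}. ?f k) = (\<Oplus>k\<in>{..n}. ?f (Suc k)) \<oplus> \<one>"
    using finsum_Suc2[of ?f n] fc x by simp
  have "(x \<oplus> \<one>) [^] Suc n = (\<Oplus>k\<in>{..n}. ?f k) \<otimes> (x \<oplus> \<one>)"
    using Suc x by simp
  also have "\<dots> = (\<Oplus>k\<in>{..n}. ?f k) \<otimes> x \<oplus> (\<Oplus>k\<in>{..n}. ?f k)"
    using x fc by (simp add: r_distr finsum_closed)
  also have "(\<Oplus>k\<in>{..n}. ?f k) \<otimes> x = (\<Oplus>k\<in>{..n}. add_pow R (n choose k) (x [^] Suc k))"
    using x fc by (simp add: finsum_ldistr add_pow_ldistr add_pow_rdistr m_comm finsum_rdistr nat_pow_Suc2)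
  also have "(\<Oplus>k\<in>{..n}. ?f k) = (\<Oplus>k\<in>{..n}. ?f (Suc k)) \<oplus> \<one>"
    using top shift by simp
  also have "(\<Oplus>k\<in>{..n}. add_pow R (n choose k) (x [^] Suc k)) \<oplus> ((\<Oplus>k\<in>{..n}. ?f (Suc k)) \<oplus> \<one>)
      = (\<Oplus>k\<in>{..n}. add_pow R (n choose k) (x [^] Suc k) \<oplus> ?f (Suc k)) \<oplus> \<one>"
    using x by (simp add: finsum_addf a_assoc finsum_closed)
  also have "(\<Oplus>k\<in>{..n}. add_pow R (n choose k) (x [^] Suc k) \<oplus> ?f (Suc k))
      = (\<Oplus>k\<in>{..n}. add_pow R (Suc n choose Suc k) (x [^] Suc k))"
    using x by (intro finsum_cong) (auto simp: add.nat_pow_mult add.m_comm)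
  also have "(\<Oplus>k\<in>{..n}. add_pow R (Suc n choose Suc k) (x [^] Suc k)) \<oplus> \<one>
      = (\<Oplus>k\<in>{..Suc n}. add_pow R (Suc n choose k) (x [^] k))"
    using finsum_Suc2[of "\<lambda>k. add_pow R (Suc n choose k) (x [^] k)" n] x by simp
  finally show ?case .
qed

lemma (in ring) add_pow_char_multiple:
  fixes p m :: nat
  assumes char: "add_pow R p \<one> = \<zero>" and y: "y \<in> carrier R"
  shows "add_pow R (p * m) y = \<zero>"
proof -
  have "add_pow R p y = add_pow R p \<one> \<otimes> y" using add_pow_ldistr[of "\<one>" y p] y by simp
  hence "add_pow R p y = \<zero>" using char y by simp
  thus ?thesis using y by (simp add: add.nat_pow_pow[symmetric])
qed

lemma (in cring) frobenius_add_one: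
  fixes p :: nat
  assumes char: "add_pow R p \<one> = \<zero>" and p: "normalization_semidom_class.prime p" and x: "x \<in> carrier R"
  shows "(x \<oplus> \<one>) [^] p = x [^] p \<oplus> \<one>"
proof -
  obtain m where m: "p = Suc (Suc m)"
    using prime_ge_2_nat[OF p] by (metis add_2_eq_Suc le_Suc_ex)
  let ?f = "\<lambda>k. add_pow R (p choose k) (x [^] k)"
  have fc: "?f \<in> UNIV \<rightarrow> carrier R" using x by auto
  have middle: "?f (Suc i) = \<zero>" if "i \<le> m" for i
  proof -
    have "p dvd (p choose Suc i)" using that m p by (intro dvd_choose_prime) auto
    then obtain t where "p choose Suc i = p * t" by blast
    thus ?thesis using add_pow_char_multiple[OF char] x by simp
  qed
  have "(x \<oplus> \<one>) [^] p = (\<Oplus>k\<in>{..Suc (Suc m)}. ?f k)"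
    using binomial_add_one[OF x, of p] unfolding m .
  also have "\<dots> = ?f (Suc (Suc m)) \<oplus> (\<Oplus>k\<in>{..Suc m}. ?f k)"
    by (rule finsum_Suc) (use fc in auto)
  also have "(\<Oplus>k\<in>{..Suc m}. ?f k) = (\<Oplus>k\<in>{..m}. ?f (Suc k)) \<oplus> ?f 0"
    by (rule finsum_Suc2) (use fc in auto)
  also have "(\<Oplus>k\<in>{..m}. ?f (Suc k)) = (\<Oplus>k\<in>{..m}. \<zero>)"
    by (intro finsum_cong) (use middle in auto)
  finally show ?thesis using x m by simp
qed

lemma (in field) frobenius_add:
  fixes p :: nat
  assumes char: "add_pow R p \<one> = \<zero>" and p: "normalization_semidom_class.prime p"
    and a: "a \<in> carrier R" and b: "b \<in> carrier R"
  shows "(a \<oplus> b) [^] p = a [^] p \<oplus> b [^] p"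
proof (cases "b = \<zero>")
  case True
  then show ?thesis using a p by (simp add: nat_pow_zero prime_gt_0_nat)
next
  case False
  have ib: "inv b \<in> carrier R" and bi: "inv b \<otimes> b = \<one>" using False b field_Units by auto
  have "(a \<otimes> inv b \<oplus> \<one>) \<otimes> b = a \<otimes> inv b \<otimes> b \<oplus> \<one> \<otimes> b"
    using a b ib by (intro l_distr) auto
  also have "a \<otimes> inv b \<otimes> b = a" using a b ib bi by (simp add: m_assoc)
  finally have ab: "a \<oplus> b = (a \<otimes> inv b \<oplus> \<one>) \<otimes> b" using b by simp
  have "(a \<oplus> b) [^] p = (a \<otimes> inv b \<oplus> \<one>) [^] p \<otimes> b [^] p"
    unfolding ab using a b ib by (intro pow_mult_distrib) (auto simp: m_comm)
  also have "(a \<otimes> inv b \<oplus> \<one>) [^] p = (a \<otimes> inv b) [^] p \<oplus> \<one>"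
    using frobenius_add_one[OF char p] a ib by simp
  also have "(a \<otimes> inv b) [^] p = a [^] p \<otimes> inv b [^] p"
    using a ib by (intro pow_mult_distrib) (auto simp: m_comm)
  also have "(a [^] p \<otimes> inv b [^] p \<oplus> \<one>) \<otimes> b [^] p = a [^] p \<otimes> inv b [^] p \<otimes> b [^] p \<oplus> \<one> \<otimes> b [^] p"
    using a b ib by (intro l_distr) auto
  also have "a [^] p \<otimes> inv b [^] p \<otimes> b [^] p = a [^] p \<otimes> (inv b [^] p \<otimes> b [^] p)"
    using a b ib by (intro m_assoc) auto
  also have "inv b [^] p \<otimes> b [^] p = (inv b \<otimes> b) [^] p"
    using a b ib by (intro pow_mult_distrib[symmetric]) (auto simp: m_comm)
  finally show ?thesis using bi a b by simp
qed

lemma (in field) frobenius_power_add: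
  fixes p :: nat
  assumes char: "add_pow R p \<one> = \<zero>" and p: "normalization_semidom_class.prime p"
    and a: "a \<in> carrier R" and b: "b \<in> carrier R"
  shows "(a \<oplus> b) [^] (p ^ k) = a [^] (p ^ k) \<oplus> b [^] (p ^ k)"
proof (induction k)
  case 0
  then show ?case using a b by simp
next
  case (Suc k)
  have pk: "p ^ Suc k = p ^ k * p" by simp
  have "(a \<oplus> b) [^] (p ^ Suc k) = ((a \<oplus> b) [^] (p ^ k)) [^] p"
    unfolding pk by (rule nat_pow_pow[symmetric]) (use a b in auto)
  also have "\<dots> = (a [^] (p ^ k)) [^] p \<oplus> (b [^] (p ^ k)) [^] p"
    using Suc frobenius_add[OF char p] a b by simp
  also have "\<dots> = a [^] (p ^ Suc k) \<oplus> b [^] (p ^ Suc k)"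
    unfolding pk using a b by (simp add: nat_pow_pow)
  finally show ?case .
qed

definition pow_fixed :: "('a, 'b) ring_scheme \<Rightarrow> nat \<Rightarrow> 'a set" where
  "pow_fixed R N = {x \<in> carrier R. x [^]\<^bsub>R\<^esub> N = x}"

lemma (in field) subring_pow_fixed:
  fixes p :: nat
  assumes char: "add_pow R p \<one> = \<zero>" and p: "normalization_semidom_class.prime p"
  shows "subring (pow_fixed R (p ^ k)) R"
  unfolding pow_fixed_def
proof (rule subringI)
  let ?N = "p ^ k" and ?F = "{x \<in> carrier R. x [^] (p ^ k) = x}"
  show "?F \<subseteq> carrier R" "\<one> \<in> ?F" by auto
  show "h1 \<otimes> h2 \<in> ?F" if "h1 \<in> ?F" "h2 \<in> ?F" for h1 h2
    using that by (auto simp: pow_mult_distrib m_comm)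
  show "h1 \<oplus> h2 \<in> ?F" if "h1 \<in> ?F" "h2 \<in> ?F" for h1 h2
    using that frobenius_power_add[OF char p, of h1 h2 k] by simp
  show "\<ominus> h \<in> ?F" if "h \<in> ?F" for h
  proof -
    have h: "h \<in> carrier R" "h [^] ?N = h" using that by auto
    have "\<zero> = (h \<oplus> \<ominus> h) [^] ?N" using h p by (simp add: r_neg nat_pow_zero prime_gt_0_nat)
    also have "\<dots> = h \<oplus> (\<ominus> h) [^] ?N"
      using frobenius_power_add[OF char p h(1), of "\<ominus> h" k] h by simp
    finally have "h \<oplus> (\<ominus> h) [^] ?N = \<zero>" by simp
    hence "(\<ominus> h) [^] ?N = \<ominus> h"
      using h by (metis a_inv_closed add.inv_equality add.m_comm nat_pow_closed)
    thus ?thesis using h by simp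
  qed
qed

section \<open>Fields of prime power order\<close>

fun geom_sum :: "('a, 'b) ring_scheme \<Rightarrow> 'a \<Rightarrow> 'a \<Rightarrow> nat \<Rightarrow> 'a" where
  "geom_sum R x c 0 = \<zero>\<^bsub>R\<^esub>"
| "geom_sum R x c (Suc n) = x \<otimes>\<^bsub>R\<^esub> geom_sum R x c n \<oplus>\<^bsub>R\<^esub> c [^]\<^bsub>R\<^esub> n"

lemma (in cring) geom_sum_closed:
  "x \<in> carrier R \<Longrightarrow> c \<in> carrier R \<Longrightarrow> geom_sum R x c n \<in> carrier R"
  by (induction n) auto

lemma (in cring) mult_geom_sum:
  assumes x: "x \<in> carrier R" and c: "c \<in> carrier R"
  shows "(x \<ominus> c) \<otimes> geom_sum R x c n = x [^] n \<ominus> c [^] n"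
proof (induction n)
  case 0
  then show ?case using x c by (simp add: a_minus_def r_neg)
next
  case (Suc n)
  have T: "geom_sum R x c n \<in> carrier R" using geom_sum_closed x c by auto
  have cn: "c [^] n \<in> carrier R" "x [^] n \<in> carrier R" using x c by auto
  have "(x \<ominus> c) \<otimes> geom_sum R x c (Suc n) = x \<otimes> ((x \<ominus> c) \<otimes> geom_sum R x c n) \<oplus> (x \<ominus> c) \<otimes> c [^] n"
    unfolding geom_sum.simps using x c T cn by algebra
  also have "\<dots> = x \<otimes> (x [^] n \<ominus> c [^] n) \<oplus> (x \<ominus> c) \<otimes> c [^] n" using Suc by simp
  also have "\<dots> = x [^] Suc n \<ominus> c [^] Suc n"
    unfolding nat_pow_Suc2[OF x, of n] nat_pow_Suc2[OF c, of n] using x c cn by algebra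
  finally show ?case .
qed

lemma (in cring) geom_sum_diag:
  assumes a: "a \<in> carrier R"
  shows "geom_sum R a a (Suc n) = add_pow R (Suc n) (a [^] n)"
proof (induction n)
  case 0
  then show ?case using a by simp
next
  case (Suc n)
  have "geom_sum R a a (Suc (Suc n)) = a \<otimes> add_pow R (Suc n) (a [^] n) \<oplus> a [^] Suc n"
    using Suc by simp
  also have "a \<otimes> add_pow R (Suc n) (a [^] n) = add_pow R (Suc n) (a \<otimes> a [^] n)"
    by (rule add_pow_rdistr) (use a in auto)
  also have "a \<otimes> a [^] n = a [^] Suc n" using a by (simp add: m_comm)
  finally show ?case using a by simp
qed

lemma (in ring_hom_ring) hom_geom_sum:
  assumes x: "x \<in> carrier R" and c: "c \<in> carrier R"
  shows "h (geom_sum R x c n) = geom_sum S (h x) (h c) n"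
proof (induction n)
  case (Suc n)
  have "geom_sum R x c n \<in> carrier R"
    using x c by (induction n) auto
  then show ?case using Suc x c by (simp add: hom_nat_pow)
qed simp

lemma (in ring_hom_ring) hom_add_pow:
  fixes n :: nat
  assumes x: "x \<in> carrier R"
  shows "h (add_pow R n x) = add_pow S n (h x)"
  by (induction n) (use x in simp_all)

definition (in ring) X_pow_minus_X :: "nat \<Rightarrow> 'a list" where
  "X_pow_minus_X N = X [^]\<^bsub>poly_ring R\<^esub> N \<ominus>\<^bsub>poly_ring R\<^esub> X"

lemma (in domain) X_pow_minus_X_closed: "X_pow_minus_X N \<in> carrier (poly_ring R)"
proof -
  interpret UP: domain "poly_ring R" by (rule univ_poly_is_domain[OF carrier_is_subring])
  show ?thesis using var_closed(1)[OF carrier_is_subring] by (simp add: X_pow_minus_X_def)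
qed

lemma (in domain) eval_X_pow_minus_X:
  assumes a: "a \<in> carrier R"
  shows "eval (X_pow_minus_X N) a = a [^] N \<ominus> a"
proof -
  interpret E: ring_hom_ring "poly_ring R" R "\<lambda>q. eval q a"
    by (rule eval_ring_hom[OF carrier_is_subring a])
  show ?thesis unfolding X_pow_minus_X_def
    using var_closed(1)[OF carrier_is_subring] a by (simp add: E.hom_nat_pow eval_var a_minus_def)
qed

lemma (in domain) degree_X_pow_minus_X:
  assumes N: "N \<ge> 2"
  shows "degree (X_pow_minus_X N) = N"
proof -
  have sub: "subring (carrier R) R" by (rule carrier_is_subring)
  have Xc: "X \<in> carrier (poly_ring R)" by (rule var_closed(1)[OF sub])
  have XN: "X [^]\<^bsub>poly_ring R\<^esub> N = monom \<one> N" using unitary_monom_eq_var_pow[OF sub] by simp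
  have mX: "\<ominus>\<^bsub>poly_ring R\<^esub> X = [\<ominus> \<one>, \<zero>]"
    using univ_poly_a_inv_def'[OF sub Xc] by (simp add: var_def)
  have eq: "X_pow_minus_X N = poly_add (monom \<one> N) [\<ominus> \<one>, \<zero>]"
    unfolding X_pow_minus_X_def a_minus_def XN mX using sub by (simp add: univ_poly_add)
  have h1: "polynomial (carrier R) (monom \<one> N)" using sub by (auto intro!: monom_is_polynomial)
  have h2: "polynomial (carrier R) [\<ominus> \<one>, \<zero>]" by (intro polynomialI) auto
  have dm: "degree (monom \<one> N) = N" by (simp add: monom_def)
  have "degree (poly_add (monom \<one> N) [\<ominus> \<one>, \<zero>]) = max (degree (monom \<one> N)) (degree [\<ominus> \<one>, \<zero>])"
    by (rule poly_add_degree_eq[OF sub h1 h2]) (use dm N in simp)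
  then show ?thesis unfolding eq dm using N by (simp del: poly_add.simps)
qed

lemma (in domain) roots_X_pow_minus_X_iff:
  assumes "N \<ge> 2"
  shows "x \<in># roots (X_pow_minus_X N) \<longleftrightarrow> x \<in> pow_fixed R N"
proof -
  have "X_pow_minus_X N \<noteq> []" using degree_X_pow_minus_X[OF assms] assms by auto
  then show ?thesis
    unfolding roots_mem_iff_is_root[OF X_pow_minus_X_closed] is_root_def pow_fixed_def
    using eval_X_pow_minus_X by (auto simp: r_right_minus_eq)
qed

lemma (in domain) poly_of_const_closed:
  "x \<in> carrier R \<Longrightarrow> poly_of_const x \<in> carrier (poly_ring R)"
  unfolding poly_of_const_def by (auto simp: univ_poly_carrier[symmetric] polynomial_def)

lemma (in domain) X_pow_minus_X_factor:
  assumes x: "x \<in> pow_fixed R N"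
  defines "T \<equiv> geom_sum (poly_ring R) X (poly_of_const x) N"
  shows "X_pow_minus_X N = [\<one>, \<ominus> x] \<otimes>\<^bsub>poly_ring R\<^esub> (T \<ominus>\<^bsub>poly_ring R\<^esub> \<one>\<^bsub>poly_ring R\<^esub>)"
proof -
  have sub: "subring (carrier R) R" by (rule carrier_is_subring)
  interpret UP: domain "poly_ring R" by (rule univ_poly_is_domain[OF sub])
  have xc: "x \<in> carrier R" and xN: "x [^] N = x" using x by (auto simp: pow_fixed_def)
  have Xc: "X \<in> carrier (poly_ring R)" by (rule var_closed(1)[OF sub])
  define C where "C = poly_of_const x"
  have Cc: "C \<in> carrier (poly_ring R)" unfolding C_def by (rule poly_of_const_closed[OF xc])
  have Y: "[\<one>, \<ominus> x] = X \<ominus>\<^bsub>poly_ring R\<^esub> C"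
    using xc univ_poly_a_inv_def'[OF sub Cc]
    by (auto simp: C_def poly_of_const_def var_def a_minus_def univ_poly_add)
  have Tc: "T \<in> carrier (poly_ring R)" unfolding T_def using UP.geom_sum_closed Xc Cc C_def by simp
  have CN: "C [^]\<^bsub>poly_ring R\<^esub> N = C"
  proof -
    interpret H: ring_hom_ring "R \<lparr> carrier := carrier R \<rparr>" "poly_ring R" poly_of_const
      by (rule canonical_embedding_ring_hom[OF sub])
    have "poly_of_const (x [^]\<^bsub>R \<lparr> carrier := carrier R \<rparr>\<^esub> N) = C [^]\<^bsub>poly_ring R\<^esub> N"
      unfolding C_def by (rule H.hom_nat_pow) (use xc in simp)
    moreover have "x [^]\<^bsub>R \<lparr> carrier := carrier R \<rparr>\<^esub> N = x [^] N" by (simp add: nat_pow_def)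
    ultimately show ?thesis using xN C_def by simp
  qed
  have "X_pow_minus_X N = (X [^]\<^bsub>poly_ring R\<^esub> N \<ominus>\<^bsub>poly_ring R\<^esub> C [^]\<^bsub>poly_ring R\<^esub> N)
      \<ominus>\<^bsub>poly_ring R\<^esub> (X \<ominus>\<^bsub>poly_ring R\<^esub> C)"
    unfolding X_pow_minus_X_def CN using Xc Cc UP.nat_pow_closed[OF Xc] by algebra
  also have "\<dots> = [\<one>, \<ominus> x] \<otimes>\<^bsub>poly_ring R\<^esub> T \<ominus>\<^bsub>poly_ring R\<^esub> [\<one>, \<ominus> x]"
    unfolding Y T_def C_def[symmetric] UP.mult_geom_sum[OF Xc Cc] ..
  also have "\<dots> = [\<one>, \<ominus> x] \<otimes>\<^bsub>poly_ring R\<^esub> (T \<ominus>\<^bsub>poly_ring R\<^esub> \<one>\<^bsub>poly_ring R\<^esub>)"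
  proof -
    have "[\<one>, \<ominus> x] \<in> carrier (poly_ring R)" unfolding Y using Xc Cc by simp
    then show ?thesis using Tc by algebra
  qed
  finally show ?thesis .
qed

lemma (in domain) eval_geom_sum_diag:
  assumes xc: "x \<in> carrier R"
  shows "eval (geom_sum (poly_ring R) X (poly_of_const x) (Suc M)) x = add_pow R (Suc M) (x [^] M)"
proof -
  have sub: "subring (carrier R) R" by (rule carrier_is_subring)
  interpret E: ring_hom_ring "poly_ring R" R "\<lambda>q. eval q x" by (rule eval_ring_hom[OF sub xc])
  have "eval (poly_of_const x) x = x" using xc by (simp add: poly_of_const_def)
  then have "eval (geom_sum (poly_ring R) X (poly_of_const x) (Suc M)) x = geom_sum R x x (Suc M)"
    unfolding E.hom_geom_sum[OF var_closed(1)[OF sub] poly_of_const_closed[OF xc]] eval_var[OF xc]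
    by (simp only:)
  then show ?thesis using geom_sum_diag[OF xc] by simp
qed

text \<open>The factorisation \<open>X\<^sup>N - X = (X - x)(T - 1)\<close> with \<open>T = (X\<^sup>N - x\<^sup>N)/(X - x)\<close> and
  \<open>T(x) = N x\<^bsup>N-1\<^esup> = 0\<close> shows that \<open>X - x\<close> divides \<open>X\<^sup>N - X\<close> only once.\<close>

lemma (in domain) count_roots_X_pow_minus_X:
  assumes N: "N \<ge> 2" and char: "add_pow R N \<one> = \<zero>"
  shows "count (roots (X_pow_minus_X N)) x \<le> 1"
proof (rule ccontr)
  have sub: "subring (carrier R) R" by (rule carrier_is_subring)
  interpret UP: domain "poly_ring R" by (rule univ_poly_is_domain[OF sub])
  let ?P = "X_pow_minus_X N" and ?Y = "[\<one>, \<ominus> x]"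
  let ?T = "geom_sum (poly_ring R) X (poly_of_const x) N"
  assume "\<not> count (roots ?P) x \<le> 1"
  hence mult: "2 \<le> alg_mult ?P x" using alg_mult_eq_count_roots[OF X_pow_minus_X_closed] by simp
  have xc: "x \<in> carrier R" using mult unfolding alg_mult_def by (auto split: if_splits)
  have "x \<in> pow_fixed R N"
    using mult roots_X_pow_minus_X_iff[OF N] alg_mult_eq_count_roots[OF X_pow_minus_X_closed]
    by (metis count_greater_zero_iff not_numeral_le_zero neq0_conv)
  note factor = X_pow_minus_X_factor[OF this]
  have Tc: "?T \<in> carrier (poly_ring R)"
    using UP.geom_sum_closed var_closed(1)[OF sub] poly_of_const_closed[OF xc] by simp
  have Yc: "?Y \<in> carrier (poly_ring R)"
    using xc by (auto simp: univ_poly_carrier[symmetric] polynomial_def)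
  have "(?Y [^]\<^bsub>poly_ring R\<^esub> (2::nat)) pdivides ?P"
    by (rule le_alg_mult_imp_pdivides[OF xc X_pow_minus_X_closed mult])
  then obtain h where hc: "h \<in> carrier (poly_ring R)"
    and Ph: "?P = ?Y [^]\<^bsub>poly_ring R\<^esub> (2::nat) \<otimes>\<^bsub>poly_ring R\<^esub> h"
    unfolding pdivides_def factor_def by auto
  have "?Y \<otimes>\<^bsub>poly_ring R\<^esub> (?T \<ominus>\<^bsub>poly_ring R\<^esub> \<one>\<^bsub>poly_ring R\<^esub>) = ?Y \<otimes>\<^bsub>poly_ring R\<^esub> (?Y \<otimes>\<^bsub>poly_ring R\<^esub> h)"
    using factor Ph Yc hc by (simp add: UP.m_assoc numeral_2_eq_2)
  hence G: "?T \<ominus>\<^bsub>poly_ring R\<^esub> \<one>\<^bsub>poly_ring R\<^esub> = ?Y \<otimes>\<^bsub>poly_ring R\<^esub> h"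
    using UP.m_lcancel[of ?Y] Tc hc Yc by (simp add: univ_poly_zero)
  interpret E: ring_hom_ring "poly_ring R" R "\<lambda>q. eval q x" by (rule eval_ring_hom[OF sub xc])
  have "eval ?T x = \<zero>"
    using eval_geom_sum_diag[OF xc, of "N - 1"] N add_pow_char_multiple[OF char, of "x [^] (N - 1)" 1] xc
    by (simp add: Suc_diff_le)
  hence "eval (?T \<ominus>\<^bsub>poly_ring R\<^esub> \<one>\<^bsub>poly_ring R\<^esub>) x = \<ominus> \<one>"
    using Tc by (simp add: a_minus_def)
  moreover have "eval (?Y \<otimes>\<^bsub>poly_ring R\<^esub> h) x = \<zero>"
    using Yc hc xc by (simp add: r_neg)
  ultimately have "\<ominus> \<zero> = \<one>" using G by simp
  then show False by simp
qed

lemma (in domain) card_pow_fixed: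
  assumes N: "N \<ge> 2" and char: "add_pow R N \<one> = \<zero>"
    and split: "splitted (X_pow_minus_X N)"
  shows "card (pow_fixed R N) = N"
proof -
  let ?P = "X_pow_minus_X N"
  have fin: "finite (pow_fixed R N)"
    using roots_X_pow_minus_X_iff[OF N] by (metis finite_set_mset subsetI rev_finite_subset)
  have "roots ?P = mset_set (pow_fixed R N)"
  proof (rule multiset_eqI)
    fix x
    show "count (roots ?P) x = count (mset_set (pow_fixed R N)) x"
      using count_roots_X_pow_minus_X[OF N char, of x] roots_X_pow_minus_X_iff[OF N, of x] fin
      by (cases "x \<in> pow_fixed R N") (auto simp: count_eq_zero_iff intro: antisym)
  qed
  then show ?thesis
    using split degree_X_pow_minus_X[OF N] unfolding splitted_def by simp
qed

lemma (in residues) add_pow_one: "add_pow R n \<one> = int n mod m"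
proof (induction n)
  case 0
  then show ?case by (simp add: res_zero_eq)
next
  case (Suc n)
  have "add_pow R (Suc n) \<one> = (int n mod m) \<oplus> \<one>" using Suc by simp
  also have "\<dots> = (int n mod m + 1) mod m" by (simp add: res_add_eq res_one_eq)
  finally show ?case by (metis mod_add_left_eq of_nat_Suc add.commute)
qed

lemma finite_field_exists:
  fixes p k :: nat
  assumes p: "normalization_semidom_class.prime p" and k: "k \<ge> 1"
  shows "\<exists>(L :: ((int list \<times> nat) multiset \<Rightarrow> int) ring) S. field L \<and> subring S L \<and> card S = p ^ k"
proof -
  define Z where "Z = residue_ring (int p)"
  interpret Zp: residues_prime p Z by unfold_locales (simp_all add: Z_def p)
  obtain L :: "((int list \<times> nat) multiset \<Rightarrow> int) ring"
    where cl: "algebraic_closure L (Zp.indexed_const ` (carrier Z))"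
      and h: "Zp.indexed_const \<in> ring_hom Z L"
    using Zp.exists_closure by blast
  define K :: "((int list \<times> nat) multiset \<Rightarrow> int) set" where "K = Zp.indexed_const ` (carrier Z)"
  interpret L: algebraic_closure L K using cl unfolding K_def .
  interpret H: ring_hom_ring Z L Zp.indexed_const
    by (rule ring_hom_ringI2[OF Zp.ring_axioms L.ring_axioms h])
  have subK: "subring K L" using L.subfield_axioms by (rule subfieldE(1))
  have "add_pow Z p \<one>\<^bsub>Z\<^esub> = \<zero>\<^bsub>Z\<^esub>" using Zp.add_pow_one[of p] by (simp add: Zp.res_zero_eq)
  then have charp: "add_pow L p \<one>\<^bsub>L\<^esub> = \<zero>\<^bsub>L\<^esub>" using H.hom_add_pow[of "\<one>\<^bsub>Z\<^esub>" p] by simp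
  define N where "N = p ^ k"
  have "p ^ 1 \<le> p ^ k" using k prime_ge_2_nat[OF p] by (intro power_increasing) auto
  then have N: "N \<ge> 2" using prime_ge_2_nat[OF p] unfolding N_def by simp
  have "N = p * p ^ (k - 1)" using k unfolding N_def by (simp add: power_eq_if)
  then have charN: "add_pow L N \<one>\<^bsub>L\<^esub> = \<zero>\<^bsub>L\<^esub>"
    using L.add_pow_char_multiple[OF charp, of "\<one>\<^bsub>L\<^esub>" "p ^ (k - 1)"] by simp
  define U where "U = K [X]\<^bsub>L\<^esub>"
  interpret U: domain U unfolding U_def by (rule L.univ_poly_is_domain[OF subK])
  have XU: "X\<^bsub>L\<^esub> \<in> carrier U" unfolding U_def by (rule L.var_closed(1)[OF subK])
  have XL: "X\<^bsub>L\<^esub> \<in> carrier (poly_ring L)" by (rule L.var_closed(1)[OF L.carrier_is_subring])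
  have pw: "X\<^bsub>L\<^esub> [^]\<^bsub>U\<^esub> N = X\<^bsub>L\<^esub> [^]\<^bsub>poly_ring L\<^esub> N"
    unfolding U_def by (simp add: nat_pow_def univ_poly_one univ_poly_mult)
  have mi: "\<ominus>\<^bsub>U\<^esub> X\<^bsub>L\<^esub> = \<ominus>\<^bsub>poly_ring L\<^esub> X\<^bsub>L\<^esub>"
    using L.univ_poly_a_inv_def'[OF subK XU[unfolded U_def]] L.univ_poly_a_inv_def'[OF L.carrier_is_subring XL]
    unfolding U_def by simp
  have "L.X_pow_minus_X N = X\<^bsub>L\<^esub> [^]\<^bsub>U\<^esub> N \<ominus>\<^bsub>U\<^esub> X\<^bsub>L\<^esub>"
    unfolding L.X_pow_minus_X_def a_minus_def pw mi unfolding U_def by (simp add: univ_poly_add)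
  then have "L.X_pow_minus_X N \<in> carrier U" using XU by simp
  then have "card (pow_fixed L N) = N"
    unfolding U_def by (intro L.card_pow_fixed[OF N charN] L.roots_over_subfield)
  moreover have "subring (pow_fixed L N) L"
    unfolding N_def by (rule L.subring_pow_fixed[OF charp p])
  ultimately show ?thesis using L.field_axioms N_def by blast
qed

definition (in ring) monic :: "'a list \<Rightarrow> bool" where
  "monic p \<longleftrightarrow> p \<noteq> [] \<and> lead_coeff p = \<one>"

context domain
begin

lemma nat_pow_not_zero:
  assumes "a \<in> carrier R" "a \<noteq> \<zero>" shows "a [^] (k::nat) \<noteq> \<zero>"
  by (induction k) (use assms integral[of _ a] in auto)

lemma monic_mult:
  assumes S: "subring S R"
    and p: "p \<in> carrier (S[X])" "monic p" and q: "q \<in> carrier (S[X])" "monic q"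
  shows "monic (p \<otimes>\<^bsub>S[X]\<^esub> q)" and "degree (p \<otimes>\<^bsub>S[X]\<^esub> q) = degree p + degree q"
proof -
  have pp: "polynomial S p" "polynomial S q" using p q by (simp_all add: univ_poly_carrier)
  have "poly_mult p q \<noteq> []" using poly_mult_integral[OF S pp] p q by (auto simp: monic_def)
  moreover have "lead_coeff (poly_mult p q) = \<one>"
    using poly_mult_lead_coeff[OF S pp] p q by (simp add: monic_def)
  ultimately show "monic (p \<otimes>\<^bsub>S[X]\<^esub> q)" by (simp add: monic_def univ_poly_mult)
  show "degree (p \<otimes>\<^bsub>S[X]\<^esub> q) = degree p + degree q"
    using poly_mult_degree_eq[OF S pp] p q by (simp add: monic_def univ_poly_mult)
qed

lemma monic_pow:
  assumes S: "subring S R" and p: "p \<in> carrier (S[X])" "monic p"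
  shows "monic (p [^]\<^bsub>S[X]\<^esub> (k::nat))" and "degree (p [^]\<^bsub>S[X]\<^esub> k) = k * degree p"
proof -
  interpret U: domain "S[X]" by (rule univ_poly_is_domain[OF S])
  have "monic (p [^]\<^bsub>S[X]\<^esub> k) \<and> degree (p [^]\<^bsub>S[X]\<^esub> k) = k * degree p"
  proof (induction k)
    case 0
    then show ?case by (simp add: univ_poly_one monic_def)
  next
    case (Suc k)
    have "p [^]\<^bsub>S[X]\<^esub> k \<in> carrier (S[X])" using p by simp
    then show ?case using monic_mult[OF S _ _ p] Suc by simp
  qed
  then show "monic (p [^]\<^bsub>S[X]\<^esub> k)" "degree (p [^]\<^bsub>S[X]\<^esub> k) = k * degree p" by auto
qed

lemma monic_finprod:
  assumes S: "subring S R" and fin: "finite A"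
    and f: "\<And>i. i \<in> A \<Longrightarrow> f i \<in> carrier (S[X]) \<and> monic (f i)"
  shows "monic (finprod (S[X]) f A)" and "degree (finprod (S[X]) f A) = (\<Sum>i\<in>A. degree (f i))"
proof -
  interpret U: domain "S[X]" by (rule univ_poly_is_domain[OF S])
  have "monic (finprod (S[X]) f A) \<and> degree (finprod (S[X]) f A) = (\<Sum>i\<in>A. degree (f i))"
    using fin f
  proof (induction A rule: finite_induct)
    case empty
    show ?case by (simp add: univ_poly_one monic_def)
  next
    case (insert a A)
    have fc: "f \<in> A \<rightarrow> carrier (S[X])" using insert by auto
    then have "finprod (S[X]) f (insert a A) = f a \<otimes>\<^bsub>S[X]\<^esub> finprod (S[X]) f A"
      using insert by simp
    then show ?case using monic_mult[OF S _ _ U.finprod_closed[OF fc]] insert by simp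
  qed
  then show "monic (finprod (S[X]) f A)" "degree (finprod (S[X]) f A) = (\<Sum>i\<in>A. degree (f i))"
    by auto
qed

lemma eval_finprod_eq_zero:
  assumes S: "subring S R" and fin: "finite A" and z: "z \<in> carrier R"
    and f: "\<And>i. i \<in> A \<Longrightarrow> f i \<in> carrier (S[X])"
    and i: "i \<in> A" and fi: "eval (f i) z = \<zero>"
  shows "eval (finprod (S[X]) f A) z = \<zero>"
proof -
  interpret U: domain "S[X]" by (rule univ_poly_is_domain[OF S])
  interpret E: ring_hom_ring "S[X]" R "\<lambda>q. eval q z" by (rule eval_ring_hom[OF S z])
  have "A = insert i (A - {i})" using i by auto
  hence "finprod (S[X]) f A = f i \<otimes>\<^bsub>S[X]\<^esub> finprod (S[X]) f (A - {i})"
    using fin f by (metis U.finprod_insert Diff_iff Pi_I finite_Diff insertI1)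
  moreover have "finprod (S[X]) f (A - {i}) \<in> carrier (S[X])" using f by (intro U.finprod_closed) auto
  ultimately show ?thesis using fi f i by simp
qed

lemma eval_finprod_not_zero:
  assumes S: "subring S R" and fin: "finite A" and z: "z \<in> carrier R"
    and f: "\<And>i. i \<in> A \<Longrightarrow> f i \<in> carrier (S[X]) \<and> eval (f i) z \<noteq> \<zero>"
  shows "eval (finprod (S[X]) f A) z \<noteq> \<zero>"
proof -
  interpret U: domain "S[X]" by (rule univ_poly_is_domain[OF S])
  interpret E: ring_hom_ring "S[X]" R "\<lambda>q. eval q z" by (rule eval_ring_hom[OF S z])
  show ?thesis using fin f
  proof (induction A rule: finite_induct)
    case (insert a A)
    have fc: "f \<in> A \<rightarrow> carrier (S[X])" using insert by auto
    have c: "finprod (S[X]) f A \<in> carrier (S[X])" using fc by simp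
    have "finprod (S[X]) f (insert a A) = f a \<otimes>\<^bsub>S[X]\<^esub> finprod (S[X]) f A"
      using insert fc by simp
    moreover have e: "eval (f a) z \<in> carrier R" "eval (finprod (S[X]) f A) z \<in> carrier R"
      using insert c by (auto intro: E.hom_closed)
    ultimately show ?case using insert c integral[OF _ e] by auto
  qed simp
qed

lemma coeff_mem: "set p \<subseteq> K \<Longrightarrow> \<zero> \<in> K \<Longrightarrow> coeff p i \<in> K"
  by (induction p) auto

lemma coeff_univ_poly_minus:
  assumes S: "subring S R" and p: "p \<in> carrier (S[X])" and r: "r \<in> carrier (S[X])"
  shows "coeff (p \<ominus>\<^bsub>S[X]\<^esub> r) i = coeff p i \<ominus> coeff r i"
proof -
  have sp: "set p \<subseteq> carrier R" "set r \<subseteq> carrier R"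
    using p r polynomial_in_carrier[OF S] by (auto simp: univ_poly_carrier[symmetric])
  have m: "map (\<lambda>a. \<ominus> a) r = map (\<lambda>b. (\<ominus> \<one>) \<otimes> b) r"
    using sp by (intro map_cong) (auto simp: l_minus)
  have "p \<ominus>\<^bsub>S[X]\<^esub> r = poly_add p (map (\<lambda>a. \<ominus> a) r)"
    unfolding a_minus_def univ_poly_a_inv_def'[OF S r] by (simp add: univ_poly_add)
  moreover have "coeff (poly_add p (map (\<lambda>a. \<ominus> a) r)) = (\<lambda>i. coeff p i \<oplus> coeff (map (\<lambda>a. \<ominus> a) r) i)"
    by (rule poly_add_coeff) (use sp in auto)
  moreover have "coeff (map (\<lambda>a. \<ominus> a) r) = (\<lambda>i. (\<ominus> \<one>) \<otimes> coeff r i)"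
    unfolding m by (rule scalar_coeff) simp
  ultimately show ?thesis using sp by (simp add: a_minus_def l_minus)
qed

lemma const_term_univ_poly_minus:
  assumes S: "subring S R" and p: "p \<in> carrier (S[X])" and r: "r \<in> carrier (S[X])"
  shows "const_term (p \<ominus>\<^bsub>S[X]\<^esub> r) = const_term p \<ominus> const_term r"
proof -
  interpret U: domain "S[X]" by (rule univ_poly_is_domain[OF S])
  show ?thesis unfolding a_minus_def
    using const_term_simprules_shell(3,4)[OF S] p r by simp
qed

lemma degree_monic_minus_le:
  assumes S: "subring S R"
    and p: "p \<in> carrier (S[X])" "monic p" "degree p = n"
    and r: "r \<in> carrier (S[X])" "monic r" "degree r = n"
    and agree: "\<And>j. j \<in> {1..<d} \<Longrightarrow> coeff p (n - j) = coeff r (n - j)"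
    and ne: "p \<ominus>\<^bsub>S[X]\<^esub> r \<noteq> []"
  shows "degree (p \<ominus>\<^bsub>S[X]\<^esub> r) + d \<le> n"
proof (rule ccontr)
  interpret U: domain "S[X]" by (rule univ_poly_is_domain[OF S])
  let ?t = "degree (p \<ominus>\<^bsub>S[X]\<^esub> r)"
  assume "\<not> ?t + d \<le> n"
  have sp: "set p \<subseteq> carrier R" "set r \<subseteq> carrier R"
    using p r polynomial_in_carrier[OF S] by (auto simp: univ_poly_carrier[symmetric])
  have "coeff p ?t = coeff r ?t"
  proof (cases "n < ?t")
    case True
    then show ?thesis using coeff_degree p r by simp
  next
    case False
    show ?thesis
    proof (cases "?t = n")
      case True
      then show ?thesis using lead_coeff_simp p r by (metis monic_def)
    next
      case False
      hence "n - ?t \<in> {1..<d}" "n - (n - ?t) = ?t" using \<open>\<not> n < ?t\<close> \<open>\<not> ?t + d \<le> n\<close> by auto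
      thus ?thesis using agree[of "n - ?t"] by simp
    qed
  qed
  then have "coeff (p \<ominus>\<^bsub>S[X]\<^esub> r) ?t = \<zero>" using coeff_univ_poly_minus[OF S p(1) r(1)] sp by simp
  moreover have "p \<ominus>\<^bsub>S[X]\<^esub> r \<in> carrier (S[X])" using p r by simp
  then have "lead_coeff (p \<ominus>\<^bsub>S[X]\<^esub> r) \<noteq> \<zero>"
    using ne by (simp add: univ_poly_carrier[symmetric] polynomial_def)
  ultimately show False using lead_coeff_simp ne by simp
qed

lemma degree_less_mult_if_const_term_zero:
  assumes S: "subring S R"
    and G: "G \<in> carrier (S[X])" "const_term G \<noteq> \<zero>" and D: "D \<in> carrier (S[X])" "D \<noteq> []"
    and const: "const_term (G \<otimes>\<^bsub>S[X]\<^esub> D) = \<zero>"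
  shows "degree G < degree (G \<otimes>\<^bsub>S[X]\<^esub> D)"
proof (rule ccontr)
  assume "\<not> degree G < degree (G \<otimes>\<^bsub>S[X]\<^esub> D)"
  moreover have pGD: "polynomial S G" "polynomial S D" using G D by (simp_all add: univ_poly_carrier)
  moreover have "G \<noteq> []" using G by (auto simp: const_term_def)
  ultimately have "degree D = 0"
    using poly_mult_degree_eq[OF S pGD] D by (simp add: univ_poly_mult)
  then obtain c where Dc: "D = [c]" and c: "c \<noteq> \<zero>" "c \<in> carrier R"
    using D pGD(2) subringE(1)[OF S] by (cases D) (auto simp: polynomial_def)
  have "const_term D = c" using c by (simp add: Dc const_term_def)
  then have "const_term G \<otimes> c = \<zero>"
    using const unfolding const_term_simprules_shell(2)[OF S G(1) D(1)] by simp
  moreover have "const_term G \<in> carrier R"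
    using const_term_simprules_shell(1)[OF S G(1)] subringE(1)[OF S] by auto
  ultimately show False using integral G(2) c by auto
qed

end

lemma finite_J: "finite (J q n)"
proof -
  have "J q n \<subseteq> {xs. set xs \<subseteq> {0..n} \<and> length xs = q}"
    by (auto simp: J_def member_le_sum_list)
  moreover have "finite {xs. set xs \<subseteq> {0..n::nat} \<and> length xs = q}"
    by (rule finite_lists_length_eq) simp
  ultimately show ?thesis by (rule finite_subset)
qed

lemma card_J: "card (J q n) = (n + q - 1) choose n"
  unfolding J_def using card_length_sum_list[of q n] by simp

lemma J_excess:
  assumes u: "u \<in> J q n" and v: "v \<in> J q n"
  defines "x \<equiv> \<lambda>i. u ! i - min (u ! i) (v ! i)" and "y \<equiv> \<lambda>i. v ! i - min (u ! i) (v ! i)"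
  shows "(\<Sum>i<q. min (u ! i) (v ! i)) + (\<Sum>i<q. x i) = n"
    and "(\<Sum>i<q. y i) = (\<Sum>i<q. x i)"
    and "dL u v = 2 * (\<Sum>i<q. x i)"
proof -
  have lu: "length u = q" "sum_list u = n" and lv: "length v = q" "sum_list v = n"
    using u v by (auto simp: J_def)
  have "n = (\<Sum>i<q. min (u ! i) (v ! i) + x i)"
    using lu by (simp add: sum_list_sum_nth atLeast0LessThan x_def)
  then show mx: "(\<Sum>i<q. min (u ! i) (v ! i)) + (\<Sum>i<q. x i) = n" by (simp add: sum.distrib)
  have "n = (\<Sum>i<q. min (u ! i) (v ! i) + y i)"
    using lv by (simp add: sum_list_sum_nth atLeast0LessThan y_def)
  then show xy: "(\<Sum>i<q. y i) = (\<Sum>i<q. x i)" using mx by (simp add: sum.distrib)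
  have "dL u v = (\<Sum>i<q. x i + y i)"
    unfolding dL_def lu(1) by (intro sum.cong) (auto simp: x_def y_def)
  then show "dL u v = 2 * (\<Sum>i<q. x i)" using xy by (simp add: sum.distrib)
qed

section \<open>The polynomials \<open>\<Prod>\<^sub>i (X - \<alpha>\<^sub>i)\<^bsup>e\<^sub>i\<^esup>\<close>\<close>

locale root_polys = domain R for R (structure) +
  fixes S :: "'a set" and \<alpha> :: "nat \<Rightarrow> 'a" and q :: nat
  assumes S: "subring S R"
    and \<alpha>_in_S: "\<And>i. i < q \<Longrightarrow> \<alpha> i \<in> S"
    and \<alpha>_not_zero: "\<And>i. i < q \<Longrightarrow> \<alpha> i \<noteq> \<zero>"
    and \<alpha>_inj: "inj_on \<alpha> {..<q}"
begin

text \<open>Coefficient lists start with the leading coefficient, so \<open>lin i\<close> is \<open>X - \<alpha>\<^sub>i\<close>.\<close>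

definition lin :: "nat \<Rightarrow> 'a list" where "lin i = [\<one>, \<ominus> \<alpha> i]"

definition root_poly :: "(nat \<Rightarrow> nat) \<Rightarrow> 'a list" where
  "root_poly e = finprod (S[X]) (\<lambda>i. lin i [^]\<^bsub>S[X]\<^esub> e i) {..<q}"

sublocale UP: domain "S[X]" by (rule univ_poly_is_domain[OF S])

lemma \<alpha>_closed: "i < q \<Longrightarrow> \<alpha> i \<in> carrier R"
  using \<alpha>_in_S subringE(1)[OF S] by auto

lemma lin_closed: "i < q \<Longrightarrow> lin i \<in> carrier (S[X])"
  unfolding lin_def univ_poly_carrier[symmetric] polynomial_def
  using \<alpha>_in_S subringE(3,5)[OF S] by auto

lemma eval_lin: "i < q \<Longrightarrow> z \<in> carrier R \<Longrightarrow> eval (lin i) z = z \<ominus> \<alpha> i"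
  using \<alpha>_closed by (simp add: lin_def a_minus_def)

lemma eval_lin_pow:
  assumes "i < q" "z \<in> carrier R"
  shows "eval (lin i [^]\<^bsub>S[X]\<^esub> k) z = (z \<ominus> \<alpha> i) [^] (k::nat)"
proof -
  interpret E: ring_hom_ring "S[X]" R "\<lambda>p. eval p z" by (rule eval_ring_hom[OF S assms(2)])
  show ?thesis using E.hom_nat_pow[OF lin_closed] eval_lin assms by simp
qed

lemma root_poly_closed: "root_poly e \<in> carrier (S[X])"
  unfolding root_poly_def using lin_closed by (intro UP.finprod_closed) auto

lemma monic_root_poly: "monic (root_poly e)" and degree_root_poly: "degree (root_poly e) = (\<Sum>i<q. e i)"
proof -
  have lin_pow: "lin i [^]\<^bsub>S[X]\<^esub> e i \<in> carrier (S[X]) \<and> monic (lin i [^]\<^bsub>S[X]\<^esub> e i)"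
    and "degree (lin i [^]\<^bsub>S[X]\<^esub> e i) = e i" if "i \<in> {..<q}" for i
    using monic_pow[OF S lin_closed, of i] UP.nat_pow_closed[OF lin_closed, of i] that
    by (auto simp: lin_def monic_def)
  then show "monic (root_poly e)" "degree (root_poly e) = (\<Sum>i<q. e i)"
    using monic_finprod[OF S, of "{..<q}" "\<lambda>i. lin i [^]\<^bsub>S[X]\<^esub> e i"] unfolding root_poly_def by auto
qed

lemma root_poly_add: "root_poly (\<lambda>i. a i + b i) = root_poly a \<otimes>\<^bsub>S[X]\<^esub> root_poly b"
proof -
  have "root_poly (\<lambda>i. a i + b i)
      = finprod (S[X]) (\<lambda>i. lin i [^]\<^bsub>S[X]\<^esub> a i \<otimes>\<^bsub>S[X]\<^esub> lin i [^]\<^bsub>S[X]\<^esub> b i) {..<q}"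
    unfolding root_poly_def using lin_closed by (intro UP.finprod_cong') (auto simp: UP.nat_pow_mult)
  also have "\<dots> = root_poly a \<otimes>\<^bsub>S[X]\<^esub> root_poly b"
    unfolding root_poly_def using lin_closed by (intro UP.finprod_multf) auto
  finally show ?thesis .
qed

lemma const_term_root_poly: "const_term (root_poly e) \<noteq> \<zero>"
proof -
  have "eval (root_poly e) \<zero> \<noteq> \<zero>" unfolding root_poly_def
  proof (rule eval_finprod_not_zero[OF S])
    fix i assume i: "i \<in> {..<q}"
    have "\<zero> \<ominus> \<alpha> i \<noteq> \<zero>" using \<alpha>_closed \<alpha>_not_zero i by (simp add: a_minus_def)
    then show "lin i [^]\<^bsub>S[X]\<^esub> e i \<in> carrier (S[X]) \<and> eval (lin i [^]\<^bsub>S[X]\<^esub> e i) \<zero> \<noteq> \<zero>"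
      using eval_lin_pow[of i \<zero>] nat_pow_not_zero \<alpha>_closed i lin_closed by (auto simp: a_minus_def)
  qed auto
  thus ?thesis by (simp add: const_term_def)
qed

text \<open>\<open>\<alpha>\<^sub>i\<close> is a root of \<open>root_poly a\<close> exactly when \<open>a i > 0\<close>.\<close>

lemma root_poly_neq:
  assumes i: "i < q" and ai: "a i > 0" and bi: "b i = 0"
  shows "root_poly a \<noteq> root_poly b"
proof
  assume eq: "root_poly a = root_poly b"
  have z: "\<alpha> i \<in> carrier R" using \<alpha>_closed i .
  have "eval (root_poly a) (\<alpha> i) = \<zero>" unfolding root_poly_def
  proof (rule eval_finprod_eq_zero[OF S _ z _ _])
    have "\<alpha> i \<ominus> \<alpha> i = \<zero>" using z by (simp add: a_minus_def r_neg)
    then show "eval (lin i [^]\<^bsub>S[X]\<^esub> a i) (\<alpha> i) = \<zero>"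
      using eval_lin_pow[OF i z] ai by (simp add: nat_pow_zero)
  qed (use i lin_closed in auto)
  moreover have "eval (root_poly b) (\<alpha> i) \<noteq> \<zero>" unfolding root_poly_def
  proof (rule eval_finprod_not_zero[OF S _ z])
    fix j assume j: "j \<in> {..<q}"
    have "(\<alpha> i \<ominus> \<alpha> j) [^] b j \<noteq> \<zero>"
    proof (cases "j = i")
      case True then show ?thesis using bi by simp
    next
      case False
      hence "\<alpha> i \<noteq> \<alpha> j" using \<alpha>_inj i j by (auto dest: inj_onD)
      hence "\<alpha> i \<ominus> \<alpha> j \<noteq> \<zero>" using z \<alpha>_closed j by simp
      then show ?thesis using nat_pow_not_zero z \<alpha>_closed j by simp
    qed
    then show "lin j [^]\<^bsub>S[X]\<^esub> b j \<in> carrier (S[X]) \<and> eval (lin j [^]\<^bsub>S[X]\<^esub> b j) (\<alpha> i) \<noteq> \<zero>"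
      using eval_lin_pow[of j "\<alpha> i"] lin_closed j z by auto
  qed auto
  ultimately show False using eq by simp
qed

lemma root_poly_eq_imp_eq:
  assumes disjoint: "\<And>i. i < q \<Longrightarrow> a i = 0 \<or> b i = 0"
    and eq: "root_poly a = root_poly b" and i: "i < q"
  shows "a i = b i"
  using root_poly_neq[OF i, of a b] root_poly_neq[OF i, of b a] disjoint[OF i] eq by (metis neq0_conv)

lemma two_delta_le_dL:
  assumes u: "u \<in> J q n" and v: "v \<in> J q n" and uv: "u \<noteq> v"
    and top: "\<And>j. j \<in> {1..<\<delta> - 1} \<Longrightarrow> coeff (root_poly ((!) u)) (n - j) = coeff (root_poly ((!) v)) (n - j)"
    and const: "const_term (root_poly ((!) u)) = const_term (root_poly ((!) v))"
  shows "2 * \<delta> \<le> dL u v"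
proof (rule ccontr)
  assume close: "\<not> 2 * \<delta> \<le> dL u v"
  define m where "m i = min (u ! i) (v ! i)" for i
  define x where "x i = u ! i - m i" for i
  define y where "y i = v ! i - m i" for i
  define w where "w = (\<Sum>i<q. x i)"
  have mw: "(\<Sum>i<q. m i) + w = n" and "dL u v = 2 * w"
    using J_excess[OF u v] unfolding m_def x_def y_def w_def by simp_all
  then have "w < \<delta>" using close by simp
  have ux: "(!) u = (\<lambda>i. m i + x i)" and vy: "(!) v = (\<lambda>i. m i + y i)"
    by (auto simp: x_def y_def m_def)
  define G where "G = root_poly m"
  define D where "D = root_poly x \<ominus>\<^bsub>S[X]\<^esub> root_poly y"
  define E where "E = root_poly ((!) u) \<ominus>\<^bsub>S[X]\<^esub> root_poly ((!) v)"
  have GD: "G \<in> carrier (S[X])" "D \<in> carrier (S[X])"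
    unfolding G_def D_def using root_poly_closed by simp_all
  have EGD: "E = G \<otimes>\<^bsub>S[X]\<^esub> D"
  proof -
    have "root_poly x \<in> carrier (S[X])" "root_poly y \<in> carrier (S[X])" by (rule root_poly_closed)+
    then show ?thesis unfolding E_def D_def ux vy root_poly_add G_def[symmetric] using GD(1) by algebra
  qed
  have "D \<noteq> \<zero>\<^bsub>S[X]\<^esub>"
  proof
    assume "D = \<zero>\<^bsub>S[X]\<^esub>"
    then have eq: "root_poly x = root_poly y" unfolding D_def using root_poly_closed by simp
    have disjoint: "\<And>i. i < q \<Longrightarrow> x i = 0 \<or> y i = 0" by (auto simp: x_def y_def m_def)
    have "x i = y i" if "i < q" for i by (rule root_poly_eq_imp_eq[OF disjoint eq that])
    then have "u = v" using u v ux vy by (intro nth_equalityI) (auto simp: J_def fun_eq_iff)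
    then show False using uv by simp
  qed
  moreover have "G \<noteq> \<zero>\<^bsub>S[X]\<^esub>" using monic_root_poly unfolding G_def by (simp add: univ_poly_zero monic_def)
  ultimately have D: "D \<noteq> []" and E: "E \<noteq> []"
    using UP.integral[OF _ GD] EGD by (auto simp: univ_poly_zero)
  have "degree (root_poly ((!) u)) = n" "degree (root_poly ((!) v)) = n"
    using u v degree_root_poly[of "(!) u"] degree_root_poly[of "(!) v"]
    by (auto simp: J_def sum_list_sum_nth atLeast0LessThan)
  then have low_degree: "degree E + (\<delta> - 1) \<le> n"
    using E unfolding E_def by (intro degree_monic_minus_le[OF S]) (use root_poly_closed monic_root_poly top in auto)
  have "const_term E = \<zero>"
    unfolding E_def const_term_univ_poly_minus[OF S root_poly_closed root_poly_closed] const
    using const_term_simprules_shell(1)[OF S root_poly_closed[of "(!) v"]] subringE(1)[OF S]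
    by (auto simp: a_minus_def r_neg)
  then have "degree G < degree E"
    unfolding EGD G_def by (rule degree_less_mult_if_const_term_zero[OF S root_poly_closed
        const_term_root_poly GD(2) D])
  moreover have "degree G = n - w" using degree_root_poly[of m] mw unfolding G_def by simp
  ultimately show False using low_degree \<open>w < \<delta>\<close> by linarith
qed

end


section \<open>The code\<close>

lemma (in domain) exists_code_in_J:
  assumes S: "subring S R" and fin: "finite S" and card: "card S = r" and qr: "q < r"
  shows "\<exists>A \<subseteq> J q n. card (J q n) \<le> r ^ (\<delta> - 2) * (r - 1) * card A \<and>
           (\<forall>u\<in>A. \<forall>v\<in>A. u \<noteq> v \<longrightarrow> 2 * \<delta> \<le> dL u v)"
proof -
  have zero: "\<zero> \<in> S" and one: "\<one> \<in> S" using subringE(2,3)[OF S] by auto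
  have card_units: "card (S - {\<zero>}) = r - 1" using zero fin card by simp
  then have "card {..<q} \<le> card (S - {\<zero>})" using qr by simp
  then obtain \<alpha> where \<alpha>: "\<alpha> ` {..<q} \<subseteq> S - {\<zero>}" "inj_on \<alpha> {..<q}"
    using card_le_inj[of "{..<q}" "S - {\<zero>}"] fin by auto
  have "root_polys R S \<alpha> q"
    unfolding root_polys_def root_polys_axioms_def using domain_axioms S \<alpha> by auto
  then interpret C: root_polys R S \<alpha> q .
  define label where "label u =
    (map (\<lambda>j. coeff (C.root_poly ((!) u)) (n - j)) [1..<\<delta> - 1], const_term (C.root_poly ((!) u)))" for u
  define labels where "labels = {l. set l \<subseteq> S \<and> length l = \<delta> - 2} \<times> (S - {\<zero>})"
  have fin_labels: "finite labels" unfolding labels_def using fin by (intro finite_cartesian_product finite_lists_length_eq) auto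
  have card_labels: "card labels = r ^ (\<delta> - 2) * (r - 1)"
    unfolding labels_def card_cartesian_product using card_lists_length_eq[OF fin] card card_units by simp
  have "(replicate (\<delta> - 2) \<zero>, \<one>) \<in> labels" unfolding labels_def using zero one by auto
  then have ne_labels: "labels \<noteq> {}" by auto
  have label: "label \<in> J q n \<rightarrow> labels"
  proof
    fix u
    have "polynomial S (C.root_poly ((!) u))" using C.root_poly_closed by (simp add: univ_poly_carrier)
    then have "set (C.root_poly ((!) u)) \<subseteq> S" by (auto simp: polynomial_def)
    then have "coeff (C.root_poly ((!) u)) j \<in> S" for j by (rule coeff_mem[OF _ zero])
    then show "label u \<in> labels"
      using const_term_simprules_shell(1)[OF S C.root_poly_closed] C.const_term_root_poly
      unfolding label_def labels_def by auto
  qed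
  obtain c where "card (J q n) \<le> card (label -` {c} \<inter> J q n) * card labels"
    using pigeonhole_card[OF label finite_J fin_labels ne_labels] by blast
  moreover have "2 * \<delta> \<le> dL u v" if "u \<in> label -` {c} \<inter> J q n" "v \<in> label -` {c} \<inter> J q n" "u \<noteq> v" for u v
    using that by (intro C.two_delta_le_dL) (auto simp: label_def)
  ultimately show ?thesis
    unfolding card_labels by (intro exI[of _ "label -` {c} \<inter> J q n"]) (auto simp: mult.commute)
qed

theorem lemma4p3:
  fixes q n \<delta> r :: nat
  assumes "q \<ge> 2" and "n \<ge> 1" and "\<delta> \<ge> 2"
    and "primepow r" and "r > q"
  shows "\<exists>A. A \<subseteq> J q n \<and>
     real (card A) \<ge> real ((n + q - 1) choose n) / (real r ^ (\<delta> - 2) * (real r - 1)) \<and>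
     (\<forall>u\<in>A. \<forall>v\<in>A. u \<noteq> v \<longrightarrow> dL u v \<ge> 2 * \<delta>)"
proof -
  obtain p k where p: "normalization_semidom_class.prime p" and k: "k > 0" and r: "r = p ^ k"
    using assms(4) unfolding primepow_def by blast
  obtain L :: "((int list \<times> nat) multiset \<Rightarrow> int) ring" and S
    where L: "field L" and S: "subring S L" and card: "card S = r"
    using finite_field_exists[OF p, of k] k r by auto
  have "finite S" using card assms(5) by (simp add: card_ge_0_finite)
  then obtain A where A: "A \<subseteq> J q n" and card_A: "card (J q n) \<le> r ^ (\<delta> - 2) * (r - 1) * card A"
    and dist: "\<forall>u\<in>A. \<forall>v\<in>A. u \<noteq> v \<longrightarrow> 2 * \<delta> \<le> dL u v"
    using domain.exists_code_in_J[OF field.axioms(1)[OF L] S _ card assms(5)] by blast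
  have "real ((n + q - 1) choose n) \<le> real (r ^ (\<delta> - 2) * (r - 1) * card A)"
    using card_A unfolding card_J by linarith
  also have "\<dots> = (real r ^ (\<delta> - 2) * (real r - 1)) * real (card A)"
    using assms(5) by (simp add: of_nat_diff)
  finally have "real ((n + q - 1) choose n) \<le> (real r ^ (\<delta> - 2) * (real r - 1)) * real (card A)" .
  moreover have "real r ^ (\<delta> - 2) * (real r - 1) > 0" using assms(1,5) by simp
  ultimately show ?thesis using A dist by (auto simp: divide_le_eq mult.commute)
qed

end
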